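(* Let $L$ be a locale and let $F$ be a sheaf of monomorphisms on $L_{+}$. For every $x \in F(i)$, the set $\{c \in L : x \in F(c)\}$ has a (unique) maximum element $s_x$; that is, $s_x = \bigvee_{x \in F(c)} c$ satisfies $x \in F(s_x)$.
   Context: A locale (frame) $L$ is a complete lattice in which finite meets distribute over arbitrary joins. It carries a Grothendieck topology in which a family $\{b_j \le a\}$ covers $a$ iff $\bigvee_j b_j = a$; a sieve on $a$ (a downward closed set of elements $\le a$) is covering iff its join is $a$. A presheaf on $L$ is a functor $L^{op}\to\mathbf{Set}$; it is a sheaf if $F(a)\to\varprojlim_{b\in R}F(b)$ is a bijection for every covering sieve $R$ of every $a$. Write $i$ for the bottom (initial) element of $L$, and $L_{+}=L\sqcup\{0\}$ for the locale obtained by adjoining a new bottom element $0<i$. A sheaf of monomorphisms on $L_{+}$ is a sheaf $F$ on $L_{+}$ such that for every relation $a\le b$ in $L$ the restriction $F(b)\to F(a)$ is injective. The set $F(i)$ is the generic fibre; for $c\in L$, since $F(c)\to F(i)$ is injective, we regard $F(c)$ as a subset of $F(i)$ and write $x\in F(c)$ for $x\in F(i)$ lying in the image of $F(c)\to F(i)$. *)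

theory Defs
  imports Main
begin

definition is_frame :: "'a::complete_lattice itself \<Rightarrow> bool" where
  "is_frame _ \<longleftrightarrow> (\<forall>(a::'a) S. inf a (Sup S) = Sup ((\<lambda>b. inf a b) ` S))"

text \<open>The locale L_+ = L with a new bottom 0 adjoined, modelled as 'a option:
  None is the new bottom 0, Some c is the element c of L.\<close>
definition leq_plus :: "'a::complete_lattice option \<Rightarrow> 'a option \<Rightarrow> bool" where
  "leq_plus u v = (case u of None \<Rightarrow> True
                    | Some a \<Rightarrow> (case v of None \<Rightarrow> False | Some b \<Rightarrow> a \<le> b))"

definition Sup_plus :: "'a::complete_lattice option set \<Rightarrow> 'a option" where
  "Sup_plus R = (if \<exists>c. Some c \<in> R then Some (Sup {c. Some c \<in> R}) else None)"

definition presheaf_plus ::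
  "('a::complete_lattice option \<Rightarrow> 'x set) \<Rightarrow> ('a option \<Rightarrow> 'a option \<Rightarrow> 'x \<Rightarrow> 'x) \<Rightarrow> bool" where
  "presheaf_plus F r \<longleftrightarrow>
     (\<forall>u v. leq_plus u v \<longrightarrow> (\<forall>x\<in>F v. r u v x \<in> F u)) \<and>
     (\<forall>u. \<forall>x\<in>F u. r u u x = x) \<and>
     (\<forall>u v w. leq_plus u v \<longrightarrow> leq_plus v w \<longrightarrow> (\<forall>x\<in>F w. r u v (r v w x) = r u w x))"

definition covering_sieve_plus :: "'a::complete_lattice option \<Rightarrow> 'a option set \<Rightarrow> bool" where
  "covering_sieve_plus a R \<longleftrightarrow>
     (\<forall>b\<in>R. leq_plus b a) \<and> (\<forall>b\<in>R. \<forall>c. leq_plus c b \<longrightarrow> c \<in> R) \<and> Sup_plus R = a"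

definition sheaf_plus ::
  "('a::complete_lattice option \<Rightarrow> 'x set) \<Rightarrow> ('a option \<Rightarrow> 'a option \<Rightarrow> 'x \<Rightarrow> 'x) \<Rightarrow> bool" where
  "sheaf_plus F r \<longleftrightarrow> presheaf_plus F r \<and>
     (\<forall>a R. covering_sieve_plus a R \<longrightarrow>
        (\<forall>s. ((\<forall>b\<in>R. s b \<in> F b) \<and> (\<forall>b\<in>R. \<forall>c\<in>R. leq_plus c b \<longrightarrow> r c b (s b) = s c))
             \<longrightarrow> (\<exists>!x. x \<in> F a \<and> (\<forall>b\<in>R. r b a x = s b))))"

definition sheaf_of_monos_plus ::
  "('a::complete_lattice option \<Rightarrow> 'x set) \<Rightarrow> ('a option \<Rightarrow> 'a option \<Rightarrow> 'x \<Rightarrow> 'x) \<Rightarrow> bool" where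
  "sheaf_of_monos_plus F r \<longleftrightarrow> sheaf_plus F r \<and>
     (\<forall>a b::'a. a \<le> b \<longrightarrow> inj_on (r (Some a) (Some b)) (F (Some b)))"

text \<open>x \<in> F(c) for x in the generic fibre F(i), i = bot.\<close>
definition in_fibre ::
  "('a::complete_lattice option \<Rightarrow> 'x set) \<Rightarrow> ('a option \<Rightarrow> 'a option \<Rightarrow> 'x \<Rightarrow> 'x) \<Rightarrow> 'x \<Rightarrow> 'a \<Rightarrow> bool" where
  "in_fibre F r x c \<longleftrightarrow> x \<in> r (Some bot) (Some c) ` F (Some c)"

end

theory Submission
  imports Defs
begin

text \<open>The elements c with x \<in> F(c) form a down-set of L containing the bottom.
  Over each such c the preimage of x in F(c) is unique, because F(c) \<rightarrow> F(i) is
  injective, and these preimages are compatible under restriction. Together with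
  r None (Some bot) x over the new bottom 0 they form a matching family on the
  sieve generated by all such c, whose join is the supremum of those c; the
  amalgamation of this family restricts to x, so x lies in F of the supremum.\<close>

lemma leq_plus_Some_Some [simp]: "leq_plus (Some a) (Some b) \<longleftrightarrow> a \<le> b"
  and leq_plus_None [simp]: "leq_plus None v"
  and leq_plus_Some_None [simp]: "\<not> leq_plus (Some a) None"
  by (simp_all add: leq_plus_def)

lemma presheaf_plus_restrict_mem:
  "presheaf_plus F r \<Longrightarrow> leq_plus u v \<Longrightarrow> y \<in> F v \<Longrightarrow> r u v y \<in> F u"
  and presheaf_plus_restrict_id:
  "presheaf_plus F r \<Longrightarrow> y \<in> F u \<Longrightarrow> r u u y = y"
  and presheaf_plus_restrict_comp:
  "presheaf_plus F r \<Longrightarrow> leq_plus u v \<Longrightarrow> leq_plus v w \<Longrightarrow> y \<in> F w \<Longrightarrow> r u v (r v w y) = r u w y"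
  unfolding presheaf_plus_def by blast+

lemma sheaf_plus_amalgamation:
  assumes "sheaf_plus F r" and "covering_sieve_plus a R"
    and "\<forall>b\<in>R. s b \<in> F b"
    and "\<forall>b\<in>R. \<forall>c\<in>R. leq_plus c b \<longrightarrow> r c b (s b) = s c"
  obtains z where "z \<in> F a" and "\<forall>b\<in>R. r b a z = s b"
  using assms unfolding sheaf_plus_def by blast

lemma covering_sieve_plus_down_closure:
  fixes C :: "'a::complete_lattice set"
  shows "covering_sieve_plus (Some (Sup C)) (insert None (Some ` {b. \<exists>c\<in>insert bot C. b \<le> c}))"
    (is "covering_sieve_plus _ ?R")
proof -
  have "{c. Some c \<in> ?R} = {b. \<exists>c\<in>insert bot C. b \<le> c}" by auto
  moreover have "Sup {b. \<exists>c\<in>insert bot C. b \<le> c} = Sup C"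
    by (rule antisym) (auto simp: bot_unique intro!: Sup_least intro: Sup_upper2)
  ultimately have "Sup_plus ?R = Some (Sup C)"
    unfolding Sup_plus_def by auto
  moreover have "\<forall>b\<in>?R. leq_plus b (Some (Sup C))"
    by (auto simp: bot_unique intro: Sup_upper2)
  moreover have "\<forall>b\<in>?R. \<forall>c. leq_plus c b \<longrightarrow> c \<in> ?R"
    by (auto simp: leq_plus_def split: option.splits intro: order_trans)
  ultimately show ?thesis
    unfolding covering_sieve_plus_def by blast
qed

lemma in_fibre_bot: "presheaf_plus F r \<Longrightarrow> x \<in> F (Some bot) \<Longrightarrow> in_fibre F r x bot"
  unfolding in_fibre_def by (metis image_eqI presheaf_plus_restrict_id)

context
  fixes F :: "'a::complete_lattice option \<Rightarrow> 'x set"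
    and r :: "'a option \<Rightarrow> 'a option \<Rightarrow> 'x \<Rightarrow> 'x"
  assumes sheaf: "sheaf_of_monos_plus F r"
begin

lemma presheaf_plus_sheaf: "presheaf_plus F r"
  using sheaf unfolding sheaf_of_monos_plus_def sheaf_plus_def by blast

definition lift :: "'x \<Rightarrow> 'a \<Rightarrow> 'x" where
  "lift x c = (THE y. y \<in> F (Some c) \<and> r (Some bot) (Some c) y = x)"

lemma lift_eqI:
  assumes "y \<in> F (Some c)" and "r (Some bot) (Some c) y = x"
  shows "lift x c = y"
  unfolding lift_def
proof (rule the_equality)
  have "inj_on (r (Some bot) (Some c)) (F (Some c))"
    using sheaf unfolding sheaf_of_monos_plus_def by simp
  then show "y' = y" if "y' \<in> F (Some c) \<and> r (Some bot) (Some c) y' = x" for y'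
    using that assms unfolding inj_on_def by blast
qed (use assms in blast)

lemma lift:
  assumes "in_fibre F r x c"
  shows "lift x c \<in> F (Some c)" and "r (Some bot) (Some c) (lift x c) = x"
proof -
  obtain y where "y \<in> F (Some c)" "r (Some bot) (Some c) y = x"
    using assms unfolding in_fibre_def by blast
  then show "lift x c \<in> F (Some c)" and "r (Some bot) (Some c) (lift x c) = x"
    using lift_eqI by simp_all
qed

lemma restrict_lift:
  assumes "in_fibre F r x c" and "b \<le> c"
  shows "in_fibre F r x b" and "r (Some b) (Some c) (lift x c) = lift x b"
proof -
  let ?y = "r (Some b) (Some c) (lift x c)"
  have y_mem: "?y \<in> F (Some b)"
    using presheaf_plus_restrict_mem[OF presheaf_plus_sheaf] lift(1)[OF assms(1)] assms(2) by simp
  have "r (Some bot) (Some b) ?y = r (Some bot) (Some c) (lift x c)"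
    using presheaf_plus_restrict_comp[OF presheaf_plus_sheaf, of "Some bot" "Some b" "Some c"]
      lift(1)[OF assms(1)] assms(2) by simp
  then have y_restrict: "r (Some bot) (Some b) ?y = x"
    using lift(2)[OF assms(1)] by simp
  show "in_fibre F r x b"
    using y_mem y_restrict unfolding in_fibre_def by (metis image_eqI)
  show "?y = lift x b"
    using lift_eqI[OF y_mem y_restrict] by simp
qed

lemma in_fibre_Sup:
  assumes x: "x \<in> F (Some bot)" and C: "\<forall>c\<in>C. in_fibre F r x c"
  shows "in_fibre F r x (Sup C)"
proof -
  define R where "R = insert None (Some ` {b. \<exists>c\<in>insert bot C. b \<le> c})"
  define s where "s u = (case u of None \<Rightarrow> r None (Some bot) x | Some b \<Rightarrow> lift x b)" for u
  have fibre_R: "in_fibre F r x b" if "Some b \<in> R" for b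
    using that C in_fibre_bot[OF presheaf_plus_sheaf x] restrict_lift(1) unfolding R_def by blast
  have s_mem: "s b \<in> F b" if "b \<in> R" for b
  proof (cases b)
    case None
    then show ?thesis
      using presheaf_plus_restrict_mem[OF presheaf_plus_sheaf _ x] unfolding s_def by simp
  next
    case (Some b')
    then show ?thesis
      using lift(1)[OF fibre_R] that unfolding s_def by simp
  qed
  have s_match: "r c b (s b) = s c" if "b \<in> R" "c \<in> R" "leq_plus c b" for b c
  proof (cases b)
    case None
    then show ?thesis
      using that s_mem presheaf_plus_restrict_id[OF presheaf_plus_sheaf] by (cases c) auto
  next
    case (Some b')
    have fb: "in_fibre F r x b'" using fibre_R that(1) Some by simp
    show ?thesis
    proof (cases c)
      case None
      have "r None (Some b') (lift x b') = r None (Some bot) (r (Some bot) (Some b') (lift x b'))"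
        using presheaf_plus_restrict_comp[OF presheaf_plus_sheaf, of None "Some bot" "Some b'"] lift(1)[OF fb]
        by simp
      then show ?thesis
        using None Some lift(2)[OF fb] unfolding s_def by simp
    next
      case (Some c')
      then show ?thesis
        using \<open>b = Some b'\<close> that(3) restrict_lift(2)[OF fb] unfolding s_def by simp
    qed
  qed
  have "sheaf_plus F r"
    using sheaf unfolding sheaf_of_monos_plus_def by blast
  then obtain z where z: "z \<in> F (Some (Sup C))" "\<forall>b\<in>R. r b (Some (Sup C)) z = s b"
  proof (rule sheaf_plus_amalgamation[of F r _ R s])
    show "covering_sieve_plus (Some (Sup C)) R"
      unfolding R_def by (rule covering_sieve_plus_down_closure)
  qed (use s_mem s_match in blast)+
  have "Some bot \<in> R" unfolding R_def by auto
  then have "r (Some bot) (Some (Sup C)) z = lift x bot"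
    using z(2) unfolding s_def by auto
  then have "r (Some bot) (Some (Sup C)) z = x"
    using lift_eqI[OF x presheaf_plus_restrict_id[OF presheaf_plus_sheaf x]] by simp
  then show ?thesis
    using z(1) unfolding in_fibre_def by (metis image_eqI)
qed

end

theorem lemma11:
  fixes F :: "'a::complete_lattice option \<Rightarrow> 'x set"
    and r :: "'a option \<Rightarrow> 'a option \<Rightarrow> 'x \<Rightarrow> 'x"
  assumes "is_frame TYPE('a)"
    and "sheaf_of_monos_plus F r"
    and "x \<in> F (Some bot)"
  shows "in_fibre F r x (Sup {c. in_fibre F r x c})"
  using in_fibre_Sup[OF assms(2,3)] by blast

end
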